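(* The Heawood graph is $4$-ordered hamiltonian.
   Context: A simple graph $G$ is called $k$-ordered hamiltonian if for every sequence $v_1,\ldots,v_k$ of $k$ distinct vertices of $G$ there exists a hamiltonian cycle in $G$ (a cycle through all vertices) containing these $k$ vertices in the specified (cyclic) order. The Heawood graph is the $3$-regular bipartite graph on $14$ vertices given by the point–line incidence graph of the Fano plane; equivalently, it is the graph with vertices $0,1,\ldots,13$ forming a hamiltonian cycle $0-1-2-\cdots-13-0$, together with the chords joining $i$ and $i+5 \pmod{14}$ for every even $i$. *)

theory Defs
  imports Main "HOL-Library.Sublist"
begin

text \<open>A simple graph is given by a vertex set V and a symmetric irreflexive
adjacency relation E.\<close>

definition hamiltonian_cycle :: "'a set \<Rightarrow> ('a \<Rightarrow> 'a \<Rightarrow> bool) \<Rightarrow> 'a list \<Rightarrow> bool" where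
  "hamiltonian_cycle V E c \<longleftrightarrow>
     distinct c \<and> set c = V \<and> 3 \<le> length c \<and>
     (\<forall>i < length c. E (c ! i) (c ! ((i + 1) mod length c)))"

text \<open>Since every rotation of a hamiltonian
cycle list is again one, requiring the sequence to be a subsequence of the list
is the same as requiring the cyclic order.\<close>

definition k_ordered_hamiltonian :: "'a set \<Rightarrow> ('a \<Rightarrow> 'a \<Rightarrow> bool) \<Rightarrow> nat \<Rightarrow> bool" where
  "k_ordered_hamiltonian V E k \<longleftrightarrow>
     (\<forall>vs. length vs = k \<and> distinct vs \<and> set vs \<subseteq> V \<longrightarrow>
        (\<exists>c. hamiltonian_cycle V E c \<and> subseq vs c))"

definition heawood_V :: "nat set" where
  "heawood_V = {..<14}"

definition heawood_E :: "nat \<Rightarrow> nat \<Rightarrow> bool" where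
  "heawood_E i j \<longleftrightarrow> i < 14 \<and> j < 14 \<and>
     (j = (i + 1) mod 14 \<or> i = (j + 1) mod 14 \<or>
      (even i \<and> j = (i + 5) mod 14) \<or> (even j \<and> i = (j + 5) mod 14))"

end

theory Submission
  imports Defs
begin

text \<open>Automorphisms map hamiltonian cycles to hamiltonian cycles, so it suffices to treat one
sequence from each orbit of the automorphism group (PGL(2,7), of order 336) on ordered 4-tuples of
distinct vertices. The group is vertex-transitive, the stabiliser of the vertex 0 has the three
orbits of vertices at distance 1, 2 and 3 from 0, and the stabiliser of 0 and a further vertex has
at most six orbits on the remaining vertices. This leaves 154 sequences \<open>[0, B, C, d]\<close>, and ten
explicit hamiltonian cycles contain every one of them in order.\<close>

text \<open>Only preservation of adjacency is required; on a finite graph a bijection with this property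
also reflects adjacency.\<close>

definition graph_automorphism :: "'a set \<Rightarrow> ('a \<Rightarrow> 'a \<Rightarrow> bool) \<Rightarrow> ('a \<Rightarrow> 'a) \<Rightarrow> bool" where
  "graph_automorphism V E f \<longleftrightarrow> bij_betw f V V \<and> (\<forall>u\<in>V. \<forall>v\<in>V. E u v \<longrightarrow> E (f u) (f v))"

definition on_hamiltonian_cycle :: "'a set \<Rightarrow> ('a \<Rightarrow> 'a \<Rightarrow> bool) \<Rightarrow> 'a list \<Rightarrow> bool" where
  "on_hamiltonian_cycle V E vs \<longleftrightarrow> (\<exists>c. hamiltonian_cycle V E c \<and> subseq vs c)"

definition ordered_extendable :: "'a set \<Rightarrow> ('a \<Rightarrow> 'a \<Rightarrow> bool) \<Rightarrow> 'a list \<Rightarrow> nat \<Rightarrow> bool" where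
  "ordered_extendable V E xs n \<longleftrightarrow>
     (\<forall>ys. length ys = n \<and> distinct (xs @ ys) \<and> set ys \<subseteq> V \<longrightarrow> on_hamiltonian_cycle V E (xs @ ys))"

lemma k_ordered_hamiltonian_iff_ordered_extendable:
  "k_ordered_hamiltonian V E k \<longleftrightarrow> ordered_extendable V E [] k"
  by (simp add: k_ordered_hamiltonian_def ordered_extendable_def on_hamiltonian_cycle_def)

lemma hamiltonian_cycle_iff_list_all2_rotate1:
  "hamiltonian_cycle V E c \<longleftrightarrow>
     distinct c \<and> set c = V \<and> 3 \<le> length c \<and> list_all2 E c (rotate1 c)"
  by (auto simp: hamiltonian_cycle_def list_all2_conv_all_nth nth_rotate1)

lemma hamiltonian_cycle_map:
  assumes f: "graph_automorphism V E f" and c: "hamiltonian_cycle V E c"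
  shows "hamiltonian_cycle V E (map f c)"
proof -
  have bij: "bij_betw f V V" and edges: "\<forall>u\<in>V. \<forall>v\<in>V. E u v \<longrightarrow> E (f u) (f v)"
    using f by (auto simp: graph_automorphism_def)
  have c_dist: "distinct c" and c_set: "set c = V" and c_len: "3 \<le> length c"
    and c_edges: "list_all2 E c (rotate1 c)"
    using c by (auto simp: hamiltonian_cycle_iff_list_all2_rotate1)
  have "distinct (map f c)"
    using c_dist c_set bij by (simp add: distinct_map bij_betw_imp_inj_on)
  moreover have "set (map f c) = V"
    using c_set bij by (simp add: bij_betw_imp_surj_on)
  moreover have "list_all2 E (map f c) (rotate1 (map f c))"
  proof -
    have "set (rotate1 c) = V" using c_set by simp
    then have "list_all2 (\<lambda>u v. E (f u) (f v)) c (rotate1 c)"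
      using c_edges c_set edges by (force simp: list_all2_iff dest: set_zip_leftD set_zip_rightD)
    then show ?thesis by (simp add: rotate1_map list_all2_map1 list_all2_map2)
  qed
  ultimately show ?thesis
    using c_len by (simp add: hamiltonian_cycle_iff_list_all2_rotate1)
qed

lemma on_hamiltonian_cycle_map:
  "graph_automorphism V E f \<Longrightarrow> on_hamiltonian_cycle V E vs \<Longrightarrow> on_hamiltonian_cycle V E (map f vs)"
  by (meson hamiltonian_cycle_map on_hamiltonian_cycle_def subseq_map)

lemma ordered_extendable_oneI:
  assumes "\<And>v. v \<in> V \<Longrightarrow> v \<notin> set xs \<Longrightarrow> on_hamiltonian_cycle V E (xs @ [v])"
  shows "ordered_extendable V E xs 1"
  using assms by (auto simp: ordered_extendable_def length_Suc_conv)

lemma ordered_extendable_orbit_reps: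
  assumes auts: "\<And>f. f \<in> F \<Longrightarrow> graph_automorphism V E f \<and> map f xs = xs"
    and reps: "\<And>v. v \<in> V \<Longrightarrow> v \<notin> set xs \<Longrightarrow> \<exists>f\<in>F. \<exists>r\<in>R. f r = v"
    and reps_extendable: "\<And>r. r \<in> R \<Longrightarrow> ordered_extendable V E (xs @ [r]) n"
  shows "ordered_extendable V E xs (Suc n)"
  unfolding ordered_extendable_def
proof (intro allI impI)
  fix ys assume ys: "length ys = Suc n \<and> distinct (xs @ ys) \<and> set ys \<subseteq> V"
  then obtain v zs where ys_eq: "ys = v # zs" and zs_len: "length zs = n"
    by (cases ys) auto
  have "v \<in> V" "v \<notin> set xs" using ys ys_eq by auto
  then obtain f r where "f \<in> F" "r \<in> R" "f r = v" using reps by blast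
  then have aut: "graph_automorphism V E f" and fixes_xs: "map f xs = xs" using auts by auto
  have bij: "bij_betw f V V" using aut by (simp add: graph_automorphism_def)
  define zs' where "zs' = map (inv_into V f) zs"
  have zs_V: "set zs \<subseteq> V" using ys ys_eq by auto
  have zs'_V: "set zs' \<subseteq> V"
    using zs_V bij_betw_inv_into[OF bij] by (auto simp: zs'_def bij_betw_def)
  have "map f zs' = zs"
    unfolding zs'_def map_map
    by (rule map_idI) (use zs_V bij_betw_inv_into_right[OF bij] in auto)
  then have map_eq: "map f (xs @ [r] @ zs') = xs @ ys"
    using fixes_xs \<open>f r = v\<close> ys_eq by simp
  then have "distinct (xs @ [r] @ zs')"
    using ys by (metis distinct_map)
  then have "on_hamiltonian_cycle V E (xs @ [r] @ zs')"
    using reps_extendable[OF \<open>r \<in> R\<close>] zs'_V zs_len by (simp add: ordered_extendable_def zs'_def)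
  then show "on_hamiltonian_cycle V E (xs @ ys)"
    using on_hamiltonian_cycle_map[OF aut] map_eq by metis
qed

lemma heawood_E_sym: "heawood_E i j \<Longrightarrow> heawood_E j i"
  by (auto simp: heawood_E_def)

lemma heawood_automorphismI:
  assumes "length p = 14" "distinct p" "set p = heawood_V"
    and edges: "\<forall>i<14. heawood_E (p ! i) (p ! ((i + 1) mod 14)) \<and>
                  (even i \<longrightarrow> heawood_E (p ! i) (p ! ((i + 5) mod 14)))"
  shows "graph_automorphism heawood_V heawood_E ((!) p)"
proof -
  have "bij_betw ((!) p) heawood_V heawood_V"
    using assms by (intro bij_betw_nth) (auto simp: heawood_V_def)
  moreover have "heawood_E (p ! u) (p ! v)" if "heawood_E u v" for u v
    using that edges heawood_E_sym unfolding heawood_E_def[of u v] by metis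
  ultimately show ?thesis by (simp add: graph_automorphism_def)
qed

text \<open>The first fourteen send 0 to each vertex in turn; the others fix 0.\<close>

definition heawood_automorphisms :: "nat list list" where
  "heawood_automorphisms = [
    [0,1,2,3,4,5,6,7,8,9,10,11,12,13],
    [1,0,5,4,3,2,7,6,11,12,13,8,9,10],
    [2,1,0,5,4,3,12,13,8,9,10,11,6,7],
    [3,2,1,0,5,4,9,10,11,6,7,8,13,12],
    [4,3,2,1,0,5,6,7,8,13,12,11,10,9],
    [5,0,1,2,3,4,9,10,11,12,13,8,7,6],
    [6,5,0,1,2,7,8,13,12,3,4,9,10,11],
    [7,2,1,0,5,6,11,10,9,4,3,12,13,8],
    [8,7,2,1,0,13,12,3,4,5,6,11,10,9],
    [9,4,3,2,1,10,11,12,13,0,5,6,7,8],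
    [10,1,0,5,4,9,8,13,12,3,2,7,6,11],
    [11,6,5,0,1,10,9,4,3,2,7,8,13,12],
    [12,3,2,1,0,13,8,7,6,5,4,9,10,11],
    [13,0,1,2,3,12,11,10,9,4,5,6,7,8],
    [0,5,4,3,2,1,10,9,8,7,6,11,12,13],
    [0,5,6,7,2,1,10,11,12,3,4,9,8,13],
    [0,1,2,7,6,5,4,3,12,11,10,9,8,13],
    [0,13,8,7,2,1,10,9,4,3,12,11,6,5],
    [0,1,10,9,4,5,6,11,12,3,2,7,8,13],
    [0,1,10,11,6,5,4,9,8,7,2,3,12,13],
    [0,13,12,3,2,1,10,11,6,7,8,9,4,5],
    [0,1,2,7,8,13,12,3,4,9,10,11,6,5],
    [0,1,2,3,12,13,8,7,6,11,10,9,4,5]]"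

lemma graph_automorphism_heawood_automorphisms:
  assumes "p \<in> set heawood_automorphisms"
  shows "graph_automorphism heawood_V heawood_E ((!) p)"
proof (rule heawood_automorphismI)
  have "\<forall>p\<in>set heawood_automorphisms. length p = 14 \<and> distinct p \<and> set p = {..<14} \<and>
     (\<forall>i<14. heawood_E (p ! i) (p ! ((i + 1) mod 14)) \<and>
        (even i \<longrightarrow> heawood_E (p ! i) (p ! ((i + 5) mod 14))))"
    by code_simp
  then show "length p = 14" "distinct p" "set p = heawood_V"
    "\<forall>i<14. heawood_E (p ! i) (p ! ((i + 1) mod 14)) \<and>
       (even i \<longrightarrow> heawood_E (p ! i) (p ! ((i + 5) mod 14)))"
    using assms by (auto simp: heawood_V_def)
qed

definition heawood_cycles :: "nat list list" where
  "heawood_cycles = [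
    [0,13,12,3,2,7,8,9,4,5,6,11,10,1],
    [0,5,4,3,12,11,6,7,2,1,10,9,8,13],
    [0,1,2,3,4,5,6,7,8,9,10,11,12,13],
    [0,13,8,7,2,1,10,9,4,3,12,11,6,5],
    [0,5,6,11,12,3,4,9,10,1,2,7,8,13],
    [0,1,10,9,4,5,6,11,12,3,2,7,8,13],
    [0,5,4,3,2,1,10,9,8,7,6,11,12,13],
    [0,13,8,9,4,5,6,7,2,3,12,11,10,1],
    [0,13,12,3,2,1,10,11,6,7,8,9,4,5],
    [0,1,2,7,8,9,10,11,6,5,4,3,12,13]]"

lemma hamiltonian_cycle_heawood_cycles:
  assumes "c \<in> set heawood_cycles"
  shows "hamiltonian_cycle heawood_V heawood_E c"
proof -
  have "\<forall>c\<in>set heawood_cycles.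
      distinct c \<and> set c = {..<14} \<and> 3 \<le> length c \<and> list_all2 heawood_E c (rotate1 c)"
    by code_simp
  then show ?thesis
    using assms by (simp add: hamiltonian_cycle_iff_list_all2_rotate1 heawood_V_def)
qed

lemma ordered_extendable_heawood_orbit_reps:
  assumes orbits: "\<forall>v<14. v \<notin> set xs \<longrightarrow>
      (\<exists>p\<in>set heawood_automorphisms. map ((!) p) xs = xs \<and> (\<exists>r\<in>set rs. p ! r = v))"
    and "\<forall>r\<in>set rs. ordered_extendable heawood_V heawood_E (xs @ [r]) n"
  shows "ordered_extendable heawood_V heawood_E xs (Suc n)"
proof (rule ordered_extendable_orbit_reps
    [where F = "(!) ` {p \<in> set heawood_automorphisms. map ((!) p) xs = xs}" and R = "set rs"])
  show "graph_automorphism heawood_V heawood_E f \<and> map f xs = xs"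
    if "f \<in> (!) ` {p \<in> set heawood_automorphisms. map ((!) p) xs = xs}" for f
    using that graph_automorphism_heawood_automorphisms by auto
  show "\<exists>f\<in>(!) ` {p \<in> set heawood_automorphisms. map ((!) p) xs = xs}. \<exists>r\<in>set rs. f r = v"
    if "v \<in> heawood_V" "v \<notin> set xs" for v
    using orbits that unfolding heawood_V_def by blast
qed (use assms in auto)

text \<open>For \<open>B \<in> {1, 2, 3}\<close>, representatives of the orbits of the stabiliser of 0 and \<open>B\<close> on the
vertices other than 0 and \<open>B\<close>.\<close>

definition heawood_reps :: "nat \<Rightarrow> nat list" where
  "heawood_reps B = (if B = 1 then [2,3,4,5] else if B = 2 then [1,3,4,5,9,10] else [1,2,6,7])"

lemma ordered_extendable_heawood_triple:
  assumes "B \<in> {1,2,3}" "C \<in> set (heawood_reps B)"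
  shows "ordered_extendable heawood_V heawood_E [0, B, C] 1"
proof (rule ordered_extendable_oneI)
  fix d assume "d \<in> heawood_V" "d \<notin> set [0, B, C]"
  moreover have "\<forall>B\<in>{1,2,3}. \<forall>C\<in>set (heawood_reps B). \<forall>d<14. d \<notin> set [0, B, C] \<longrightarrow>
      (\<exists>c\<in>set heawood_cycles. subseq [0, B, C, d] c)"
    by code_simp
  ultimately obtain c where "c \<in> set heawood_cycles" "subseq [0, B, C, d] c"
    using assms unfolding heawood_V_def lessThan_iff by blast
  then show "on_hamiltonian_cycle heawood_V heawood_E ([0, B, C] @ [d])"
    using hamiltonian_cycle_heawood_cycles by (auto simp: on_hamiltonian_cycle_def)
qed

lemma ordered_extendable_heawood_pair:
  assumes "B \<in> {1,2,3}"
  shows "ordered_extendable heawood_V heawood_E [0, B] 2"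
proof -
  have orbits: "\<forall>B\<in>{1,2,3}. \<forall>v<14. v \<notin> set [0, B] \<longrightarrow>
      (\<exists>p\<in>set heawood_automorphisms. map ((!) p) [0, B] = [0, B] \<and>
         (\<exists>r\<in>set (heawood_reps B). p ! r = v))"
    by code_simp
  have "ordered_extendable heawood_V heawood_E [0, B] (Suc 1)"
  proof (rule ordered_extendable_heawood_orbit_reps[where rs = "heawood_reps B"])
    show "\<forall>v<14. v \<notin> set [0, B] \<longrightarrow>
        (\<exists>p\<in>set heawood_automorphisms. map ((!) p) [0, B] = [0, B] \<and>
           (\<exists>r\<in>set (heawood_reps B). p ! r = v))"
      using orbits assms by (rule bspec)
    show "\<forall>r\<in>set (heawood_reps B). ordered_extendable heawood_V heawood_E ([0, B] @ [r]) 1"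
      using ordered_extendable_heawood_triple[OF assms] by simp
  qed
  then show ?thesis by (simp add: numeral_eq_Suc)
qed

lemma ordered_extendable_heawood_vertex: "ordered_extendable heawood_V heawood_E [0] 3"
proof -
  have "\<forall>v<14. v \<notin> set [0] \<longrightarrow>
      (\<exists>p\<in>set heawood_automorphisms. map ((!) p) [0] = [0] \<and> (\<exists>r\<in>set [1,2,3]. p ! r = v))"
    by code_simp
  then have "ordered_extendable heawood_V heawood_E [0] (Suc 2)"
    using ordered_extendable_heawood_pair
    by (intro ordered_extendable_heawood_orbit_reps[where rs = "[1,2,3]"]) (auto simp: heawood_V_def)
  then show ?thesis by (simp add: numeral_eq_Suc)
qed

theorem theorem3p3:
  shows "k_ordered_hamiltonian heawood_V heawood_E 4"
proof -
  have "\<forall>v<14. \<exists>p\<in>set heawood_automorphisms. p ! 0 = v"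
    by code_simp
  then have "ordered_extendable heawood_V heawood_E [] (Suc 3)"
    using ordered_extendable_heawood_vertex
    by (intro ordered_extendable_heawood_orbit_reps[where rs = "[0]"]) (auto simp: heawood_V_def)
  then show ?thesis
    by (simp add: k_ordered_hamiltonian_iff_ordered_extendable numeral_eq_Suc)
qed

end
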